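(* Let $T>0$, $F:\mathbb{R}\times\mathbb{R}^n\rightrightarrows\mathbb{R}^n$ a set-valued mapping, $G_t(x):=F(t,x)$ for $t\in[0,T]$, $x\in\mathbb{R}^n$, and $x:[0,T]\to\mathbb{R}^n$ a mapping. Assume that for each $\varepsilon>0$ there is $\beta>0$ such that for each $t\in[0,T]$, each $(u,y)\in(B[x(t),\beta]\times B[0,\beta])\cap\operatorname{gph}G_t$ and each $(y^*,x^* )\in\operatorname{gph}D^*G_t(u,y)$, $$|\langle x^*,u-x(t)\rangle-\langle y^*,y\rangle|\le\varepsilon\|(x^*,y^* )\|\,\|(u,y)-(x(t),0)\|.$$ Then for each $\varepsilon>0$ there is $\beta>0$ such that for each $t\in[0,T]$, each $(u,y)\in(B[x(t),\beta]\times B[0,\beta])\cap\operatorname{gph}G_t$ and each $(A,B)\in\mathcal{A}_{\mathrm{reg}}G_t(u,y)$, $$\|u-A^{-1}By-x(t)\|\le\varepsilon\,\|A^{-1}\|\,\|(A\mid B)\|_F\,\|(u,y)-(x(t),0)\|.$$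
   Context: Euclidean norm on $\mathbb{R}^n$, max-norm on products, $\|A^{-1}\|$ the induced operator norm, $\|\cdot\|_F$ the Frobenius norm, $(A\mid B)$ horizontal concatenation; $B[z,r]$ closed ball. Limiting coderivative: $\operatorname{gph}D^*G(x,y)=\{(y^*,x^* ):(x^*,-y^* )\in N_{\operatorname{gph}G}(x,y)\}$, $N$ the limiting normal cone. For $G:\mathbb{R}^n\rightrightarrows\mathbb{R}^n$ and $(x,y)\in\operatorname{gph}G$, $\mathcal{A}_{\mathrm{reg}}G(x,y)$ is the set of pairs $(A,B)$ of $n\times n$ matrices such that $A$ is invertible and $((B)_i^T,(A)_i^T)\in\operatorname{gph}D^*G(x,y)$ for each $i=1,\dots,n$, where $(M)_i$ denotes the $i$-th row of $M$. *)

theory Defs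
  imports "HOL-Analysis.Analysis"
begin

definition frechet_normal :: "'a::real_inner set \<Rightarrow> 'a \<Rightarrow> 'a set" where
  "frechet_normal S z = {v. z \<in> S \<and>
     (\<forall>e>0. \<exists>d>0. \<forall>z'\<in>S. norm (z' - z) < d \<longrightarrow> inner v (z' - z) \<le> e * norm (z' - z))}"

definition limiting_normal :: "'a::real_inner set \<Rightarrow> 'a \<Rightarrow> 'a set" where
  "limiting_normal S z = {v. z \<in> S \<and> (\<exists>zs vs. (\<forall>k. zs k \<in> S \<and> vs k \<in> frechet_normal S (zs k))
       \<and> zs \<longlonglongrightarrow> z \<and> vs \<longlonglongrightarrow> v)}"

definition gph :: "('a \<Rightarrow> 'b set) \<Rightarrow> ('a \<times> 'b) set" where
  "gph G = {(x, y). y \<in> G x}"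

definition coderiv_gph :: "('a::real_inner \<Rightarrow> 'b::real_inner set) \<Rightarrow> 'a \<Rightarrow> 'b \<Rightarrow> ('b \<times> 'a) set" where
  "coderiv_gph G x y = {(ys, xs). (xs, - ys) \<in> limiting_normal (gph G) (x, y)}"

definition A_reg :: "(real^'n \<Rightarrow> (real^'n) set) \<Rightarrow> real^'n \<Rightarrow> real^'n
      \<Rightarrow> ((real^'n^'n) \<times> (real^'n^'n)) set" where
  "A_reg G x y = {(A, B). invertible A \<and> (\<forall>i. (B $ i, A $ i) \<in> coderiv_gph G x y)}"

definition frob_concat :: "real^'n^'n \<Rightarrow> real^'n^'n \<Rightarrow> real" where
  "frob_concat A B = sqrt (\<Sum>i\<in>UNIV. \<Sum>j\<in>UNIV. (A $ i $ j)\<^sup>2 + (B $ i $ j)\<^sup>2)"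

definition mat_opnorm :: "real^'n^'n \<Rightarrow> real" where
  "mat_opnorm M = onorm (\<lambda>v. M *v v)"

end

theory Submission
  imports Defs
begin

text \<open>Applied to the rows \<open>(B\<^sub>i, A\<^sub>i)\<close> of a regular pair, the hypothesis bounds the
  \<open>i\<close>-th component of \<open>A(u - x(t)) - B y\<close> by \<open>\<epsilon> \<parallel>(A\<^sub>i, B\<^sub>i)\<parallel> \<parallel>(u, y) - (x(t), 0)\<parallel>\<close>.
  Summing squares over \<open>i\<close> turns the row norms into the Frobenius norm of \<open>(A | B)\<close>, and
  applying \<open>A\<^sup>-\<^sup>1\<close> to \<open>A(u - x(t)) - B y\<close> gives exactly \<open>u - A\<^sup>-\<^sup>1 B y - x(t)\<close>.
  The estimate is pointwise, so the \<open>\<beta>\<close> of the hypothesis for \<open>\<epsilon>\<close> serves unchanged.\<close>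

lemma matrix_inv_left:
  fixes A :: "'a::semiring_1^'n^'m"
  assumes "invertible A"
  shows "matrix_inv A ** A = mat 1"
  using assms unfolding invertible_def matrix_inv_def by (rule someI2_ex) auto

lemma norm_matrix_vector_le_mat_opnorm: "norm (M *v v) \<le> mat_opnorm M * norm v"
  unfolding mat_opnorm_def by (rule onorm[OF matrix_vector_mul_bounded_linear])

lemma mat_opnorm_nonneg: "0 \<le> mat_opnorm M"
  unfolding mat_opnorm_def by (rule onorm_pos_le[OF matrix_vector_mul_bounded_linear])

lemma frob_concat_eq_L2_set_rows:
  "frob_concat A B = L2_set (\<lambda>i. sqrt ((norm (A $ i))\<^sup>2 + (norm (B $ i))\<^sup>2)) UNIV"
  by (simp add: frob_concat_def L2_set_def norm_vec_def sum_nonneg sum.distrib)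

lemma norm_le_frob_concat_if_rowwise:
  fixes w :: "real^'n" and A B :: "real^'n^'n"
  assumes "0 \<le> c" and row: "\<And>i. \<bar>w $ i\<bar> \<le> c * max (norm (A $ i)) (norm (B $ i))"
  shows "norm w \<le> c * frob_concat A B"
proof -
  have "\<bar>w $ i\<bar> \<le> c * sqrt ((norm (A $ i))\<^sup>2 + (norm (B $ i))\<^sup>2)" for i
  proof -
    have "max (norm (A $ i)) (norm (B $ i)) \<le> sqrt ((norm (A $ i))\<^sup>2 + (norm (B $ i))\<^sup>2)"
      by (simp add: real_sqrt_sum_squares_ge1 real_sqrt_sum_squares_ge2)
    then show ?thesis
      using row[of i] \<open>0 \<le> c\<close> by (meson mult_left_mono order_trans)
  qed
  then have "L2_set (\<lambda>i. \<bar>w $ i\<bar>) UNIV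
      \<le> L2_set (\<lambda>i. c * sqrt ((norm (A $ i))\<^sup>2 + (norm (B $ i))\<^sup>2)) UNIV"
    by (rule L2_set_mono) simp
  then show ?thesis
    using \<open>0 \<le> c\<close> by (simp add: norm_vec_def frob_concat_eq_L2_set_rows L2_set_right_distrib)
qed

lemma residual_le_if_rowwise:
  fixes A B :: "real^'n^'n" and d y :: "real^'n"
  assumes "invertible A" and "0 \<le> c"
    and row: "\<And>i. \<bar>inner (A $ i) d - inner (B $ i) y\<bar> \<le> c * max (norm (A $ i)) (norm (B $ i))"
  shows "norm (d - matrix_inv A *v (B *v y)) \<le> c * mat_opnorm (matrix_inv A) * frob_concat A B"
proof -
  let ?w = "A *v d - B *v y"
  have "d - matrix_inv A *v (B *v y) = matrix_inv A *v ?w"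
    by (simp add: matrix_vector_mult_diff_distrib matrix_vector_mul_assoc
        matrix_inv_left[OF \<open>invertible A\<close>])
  then have "norm (d - matrix_inv A *v (B *v y)) \<le> mat_opnorm (matrix_inv A) * norm ?w"
    by (simp add: norm_matrix_vector_le_mat_opnorm)
  also have "\<dots> \<le> mat_opnorm (matrix_inv A) * (c * frob_concat A B)"
    using \<open>0 \<le> c\<close> row
    by (intro mult_left_mono mat_opnorm_nonneg norm_le_frob_concat_if_rowwise)
      (simp_all add: matrix_vector_mul_component)
  finally show ?thesis
    by (simp add: mult_ac)
qed

lemma A_reg_residual_le:
  fixes G :: "real^'n \<Rightarrow> (real^'n) set"
  assumes "(A, B) \<in> A_reg G u y" and "0 \<le> \<epsilon>"
    and coderiv: "\<And>ys xs. (ys, xs) \<in> coderiv_gph G u y \<Longrightarrow>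
      \<bar>inner xs (u - z) - inner ys y\<bar> \<le> \<epsilon> * max (norm xs) (norm ys) * max (norm (u - z)) (norm y)"
  shows "norm (u - matrix_inv A *v (B *v y) - z)
    \<le> \<epsilon> * mat_opnorm (matrix_inv A) * frob_concat A B * max (norm (u - z)) (norm y)"
proof -
  let ?m = "max (norm (u - z)) (norm y)"
  have "invertible A" and rows: "\<And>i. (B $ i, A $ i) \<in> coderiv_gph G u y"
    using \<open>(A, B) \<in> A_reg G u y\<close> by (auto simp: A_reg_def)
  have "norm ((u - z) - matrix_inv A *v (B *v y)) \<le> (\<epsilon> * ?m) * mat_opnorm (matrix_inv A) * frob_concat A B"
  proof (rule residual_le_if_rowwise[OF \<open>invertible A\<close>])
    show "0 \<le> \<epsilon> * ?m"
      using \<open>0 \<le> \<epsilon>\<close> by (simp add: le_max_iff_disj)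
    show "\<bar>inner (A $ i) (u - z) - inner (B $ i) y\<bar> \<le> \<epsilon> * ?m * max (norm (A $ i)) (norm (B $ i))" for i
      using coderiv[OF rows[of i]] by (simp add: mult_ac)
  qed
  then show ?thesis
    by (simp add: algebra_simps)
qed

theorem lemma5p1:
  fixes T :: real and F :: "real \<Rightarrow> real^'n \<Rightarrow> (real^'n) set" and x :: "real \<Rightarrow> real^'n"
  assumes "T > 0"
  assumes hyp: "\<forall>\<epsilon>>0. \<exists>\<beta>>0. \<forall>t\<in>{0..T}. \<forall>u y.
      u \<in> cball (x t) \<beta> \<and> y \<in> cball 0 \<beta> \<and> (u, y) \<in> gph (F t) \<longrightarrow>
      (\<forall>ys xs. (ys, xs) \<in> coderiv_gph (F t) u y \<longrightarrow>
         \<bar>inner xs (u - x t) - inner ys y\<bar>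
           \<le> \<epsilon> * max (norm xs) (norm ys) * max (norm (u - x t)) (norm y))"
  shows "\<forall>\<epsilon>>0. \<exists>\<beta>>0. \<forall>t\<in>{0..T}. \<forall>u y.
      u \<in> cball (x t) \<beta> \<and> y \<in> cball 0 \<beta> \<and> (u, y) \<in> gph (F t) \<longrightarrow>
      (\<forall>A B. (A, B) \<in> A_reg (F t) u y \<longrightarrow>
         norm (u - matrix_inv A *v (B *v y) - x t)
           \<le> \<epsilon> * mat_opnorm (matrix_inv A) * frob_concat A B * max (norm (u - x t)) (norm y))"
proof (intro allI impI)
  fix \<epsilon> :: real
  assume "\<epsilon> > 0"
  with hyp show "\<exists>\<beta>>0. \<forall>t\<in>{0..T}. \<forall>u y.
      u \<in> cball (x t) \<beta> \<and> y \<in> cball 0 \<beta> \<and> (u, y) \<in> gph (F t) \<longrightarrow>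
      (\<forall>A B. (A, B) \<in> A_reg (F t) u y \<longrightarrow>
         norm (u - matrix_inv A *v (B *v y) - x t)
           \<le> \<epsilon> * mat_opnorm (matrix_inv A) * frob_concat A B * max (norm (u - x t)) (norm y))"
    by (meson A_reg_residual_le less_imp_le)
qed

end
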